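(* Let $\mathcal{X}$ and $\mathcal{V}$ be infinite sets (of alternatives and voters). There is no voting method $F$ (on profiles with alternatives from $\mathcal{X}$ and voters from $\mathcal{V}$) that simultaneously satisfies positive involvement, the Condorcet winner criterion, the Condorcet loser criterion, resolvability, and ordinal margin invariance. This holds whether resolvability is taken to mean single-voter resolvability or asymptotic resolvability.
   Context: A profile $\mathbf{P}$ is a function from a nonempty finite set $V(\mathbf{P})\subseteq\mathcal{V}$ (the voters of $\mathbf{P}$) to the set of strict weak orders on a nonempty finite set $X(\mathbf{P})\subseteq\mathcal{X}$ (the alternatives of $\mathbf{P}$); $(x,y)\in\mathbf{P}(i)$ means voter $i$ strictly prefers $x$ to $y$. The profile is linear if every $\mathbf{P}(i)$ is a linear order. For $x,y\in X(\mathbf{P})$, $\mathrm{Support}_\mathbf{P}(a,b)=|\{i\in V(\mathbf{P}) : (a,b)\in\mathbf{P}(i)\}|$ and $\mathrm{Margin}_\mathbf{P}(x,y)=\mathrm{Support}_\mathbf{P}(x,y)-\mathrm{Support}_\mathbf{P}(y,x)$. A voting method is a function $F$ assigning to every profile $\mathbf{P}$ a nonempty subset $F(\mathbf{P})\subseteq X(\mathbf{P})$. Positive involvement: for all profiles $\mathbf{P},\mathbf{P}'$, if $x\in F(\mathbf{P})$ and $\mathbf{P}'$ is obtained from $\mathbf{P}$ by adding one new voter whose ranking (over $X(\mathbf{P})$) places $x$ uniquely first, then $x\in F(\mathbf{P}')$. Condorcet winner criterion: whenever $\mathbf{P}$ has a Condorcet winner $x$ (i.e. $\mathrm{Margin}_\mathbf{P}(x,y)>0$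 for all $y\neq x$), $F(\mathbf{P})=\{x\}$. Condorcet loser criterion: $F(\mathbf{P})$ never contains a Condorcet loser, i.e. an $x$ with $\mathrm{Margin}_\mathbf{P}(y,x)>0$ for all $y\in X(\mathbf{P})\setminus\{x\}$. Single-voter resolvability: for every profile $\mathbf{P}$ with $|F(\mathbf{P})|>1$ there is a profile $\mathbf{P}'$ obtained from $\mathbf{P}$ by adding exactly one new voter such that $|F(\mathbf{P}')|=1$. Asymptotic resolvability: for every positive integer $m$, as the number $n$ of voters tends to infinity, the proportion of linear profiles with $m$ (fixed) alternatives and $n$ voters for which $|F(\mathbf{P})|>1$ tends to $0$. Ordinal margin graph: $\mathbb{M}(\mathbf{P})=(M,\succ)$ where $M$ is the directed graph on $X(\mathbf{P})$ with an edge $x\to y$ iff $\mathrm{Margin}_\mathbf{P}(x,y)>0$, and $\succ$ is the strict weak order on edges with $(a,b)\succ(c,d)$ iff $\mathrm{Margin}_\mathbf{P}(a,b)>\mathrm{Margin}_\mathbf{P}(c,d)$. Ordinal margin invariance: $\mathbb{M}(\mathbf{P})=\mathbb{M}(\mathbf{P}')$ implies $F(\mathbf{P})=F(\mathbf{P}')$. *)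

theory Defs
  imports Complex_Main
begin

text \<open>A (candidate) profile: voter set, alternative set, and for each voter a strict
  preference relation; (x,y) in prefs P i means voter i strictly prefers x to y.
  For canonicity, voters outside the voter set are required to have the empty relation.\<close>
record ('v, 'x) profile =
  voters :: "'v set"
  alts   :: "'x set"
  prefs  :: "'v \<Rightarrow> ('x \<times> 'x) set"

definition strict_weak_order_on :: "'x set \<Rightarrow> ('x \<times> 'x) set \<Rightarrow> bool" where
  "strict_weak_order_on X R \<longleftrightarrow>
     R \<subseteq> X \<times> X \<and>
     (\<forall>a\<in>X. (a, a) \<notin> R) \<and>
     (\<forall>a\<in>X. \<forall>b\<in>X. \<forall>c\<in>X. (a, b) \<in> R \<and> (b, c) \<in> R \<longrightarrow> (a, c) \<in> R) \<and>
     (\<forall>a\<in>X. \<forall>b\<in>X. \<forall>c\<in>X. (a, b) \<in> R \<longrightarrow> (a, c) \<in> R \<or> (c, b) \<in> R)"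

definition linear_order_on' :: "'x set \<Rightarrow> ('x \<times> 'x) set \<Rightarrow> bool" where
  "linear_order_on' X R \<longleftrightarrow> strict_weak_order_on X R \<and>
     (\<forall>a\<in>X. \<forall>b\<in>X. a \<noteq> b \<longrightarrow> (a, b) \<in> R \<or> (b, a) \<in> R)"

definition is_profile :: "('v, 'x) profile \<Rightarrow> bool" where
  "is_profile P \<longleftrightarrow>
     finite (voters P) \<and> voters P \<noteq> {} \<and> finite (alts P) \<and> alts P \<noteq> {} \<and>
     (\<forall>i\<in>voters P. strict_weak_order_on (alts P) (prefs P i)) \<and>
     (\<forall>i. i \<notin> voters P \<longrightarrow> prefs P i = {})"

definition is_linear_profile :: "('v, 'x) profile \<Rightarrow> bool" where
  "is_linear_profile P \<longleftrightarrow> is_profile P \<and>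
     (\<forall>i\<in>voters P. linear_order_on' (alts P) (prefs P i))"

definition support :: "('v, 'x) profile \<Rightarrow> 'x \<Rightarrow> 'x \<Rightarrow> nat" where
  "support P a b = card {i \<in> voters P. (a, b) \<in> prefs P i}"

definition margin :: "('v, 'x) profile \<Rightarrow> 'x \<Rightarrow> 'x \<Rightarrow> int" where
  "margin P x y = int (support P x y) - int (support P y x)"

definition add_voter :: "('v, 'x) profile \<Rightarrow> 'v \<Rightarrow> ('x \<times> 'x) set \<Rightarrow> ('v, 'x) profile" where
  "add_voter P j L = P\<lparr>voters := insert j (voters P), prefs := (prefs P)(j := L)\<rparr>"

definition voting_method :: "(('v, 'x) profile \<Rightarrow> 'x set) \<Rightarrow> bool" where
  "voting_method F \<longleftrightarrow> (\<forall>P. is_profile P \<longrightarrow> F P \<noteq> {} \<and> F P \<subseteq> alts P)"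

definition positive_involvement :: "(('v, 'x) profile \<Rightarrow> 'x set) \<Rightarrow> bool" where
  "positive_involvement F \<longleftrightarrow>
     (\<forall>P x j L. is_profile P \<and> x \<in> F P \<and> j \<notin> voters P \<and>
        strict_weak_order_on (alts P) L \<and> (\<forall>y\<in>alts P - {x}. (x, y) \<in> L)
        \<longrightarrow> x \<in> F (add_voter P j L))"

definition condorcet_winner :: "('v, 'x) profile \<Rightarrow> 'x \<Rightarrow> bool" where
  "condorcet_winner P x \<longleftrightarrow> x \<in> alts P \<and> (\<forall>y\<in>alts P - {x}. margin P x y > 0)"

text \<open>Condorcet loser: only meaningful with at least two alternatives.\<close>
definition condorcet_loser :: "('v, 'x) profile \<Rightarrow> 'x \<Rightarrow> bool" where
  "condorcet_loser P x \<longleftrightarrow> x \<in> alts P \<and> alts P \<noteq> {x} \<and>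
     (\<forall>y\<in>alts P - {x}. margin P y x > 0)"

definition condorcet_winner_criterion :: "(('v, 'x) profile \<Rightarrow> 'x set) \<Rightarrow> bool" where
  "condorcet_winner_criterion F \<longleftrightarrow>
     (\<forall>P x. is_profile P \<and> condorcet_winner P x \<longrightarrow> F P = {x})"

definition condorcet_loser_criterion :: "(('v, 'x) profile \<Rightarrow> 'x set) \<Rightarrow> bool" where
  "condorcet_loser_criterion F \<longleftrightarrow>
     (\<forall>P x. is_profile P \<and> condorcet_loser P x \<longrightarrow> x \<notin> F P)"

definition single_voter_resolvable :: "(('v, 'x) profile \<Rightarrow> 'x set) \<Rightarrow> bool" where
  "single_voter_resolvable F \<longleftrightarrow>
     (\<forall>P. is_profile P \<and> card (F P) > 1 \<longrightarrow>
        (\<exists>j L. j \<notin> voters P \<and> strict_weak_order_on (alts P) L \<and>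
               card (F (add_voter P j L)) = 1))"

definition lin_profiles :: "'x set \<Rightarrow> 'v set \<Rightarrow> ('v, 'x) profile set" where
  "lin_profiles X V = {P. is_linear_profile P \<and> alts P = X \<and> voters P = V}"

definition unresolved_proportion ::
    "(('v, 'x) profile \<Rightarrow> 'x set) \<Rightarrow> 'x set \<Rightarrow> 'v set \<Rightarrow> real" where
  "unresolved_proportion F X V =
     real (card {P \<in> lin_profiles X V. card (F P) > 1}) / real (card (lin_profiles X V))"

definition asymptotically_resolvable :: "(('v, 'x) profile \<Rightarrow> 'x set) \<Rightarrow> bool" where
  "asymptotically_resolvable F \<longleftrightarrow>
     (\<forall>X. finite X \<and> X \<noteq> {} \<longrightarrow>
        (\<forall>\<epsilon>>0. \<exists>N. \<forall>V. finite V \<and> card V \<ge> N \<longrightarrow> unresolved_proportion F X V < \<epsilon>))"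

definition ordinal_margin_graph ::
    "('v, 'x) profile \<Rightarrow> 'x set \<times> ('x \<times> 'x) set \<times> (('x \<times> 'x) \<times> ('x \<times> 'x)) set" where
  "ordinal_margin_graph P =
     (let E = {(a, b). a \<in> alts P \<and> b \<in> alts P \<and> margin P a b > 0}
      in (alts P, E,
          {((a, b), (c, d)). (a, b) \<in> E \<and> (c, d) \<in> E \<and> margin P a b > margin P c d}))"

definition ordinal_margin_invariant :: "(('v, 'x) profile \<Rightarrow> 'x set) \<Rightarrow> bool" where
  "ordinal_margin_invariant F \<longleftrightarrow>
     (\<forall>P P'. is_profile P \<and> is_profile P' \<and>
        ordinal_margin_graph P = ordinal_margin_graph P' \<longrightarrow> F P = F P')"

end

theory Submission
  imports Defs "HOL-Analysis.Convex"
begin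

(* Fix four alternatives a, b, c, d. Adding voters who rank a winner x first keeps x winning, so x
   cannot win a profile that has such an extension with another Condorcet winner. This forces a to
   win P1, c to win P5 (where a is also the Condorcet loser) and a or b to win P2. Adding more voters
   and using ordinal margin invariance (Q2 has the ordinal margin graph of P2; P4b and P4a, as well
   as P3a and P3c, have equal margins), either P4a or P3c gets two winners.

   The margins of P4a and P3c are nonzero and their positive values are pairwise at least 3 apart.
   Such an ordinal margin graph is shared by every profile whose margins lie within s/2 of s times
   the original ones, for any s > 0. Hence one additional voter cannot break the tie, and a
   second-moment estimate under a slightly tilted distribution of ballots shows that a fixed
   positive fraction of all linear profiles with many voters has the same two winners. *)

section \<open>Margins and profiles\<close>

definition ballot_margin :: "('x \<times> 'x) set \<Rightarrow> 'x \<Rightarrow> 'x \<Rightarrow> int" where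
  "ballot_margin L x y = of_bool ((x, y) \<in> L) - of_bool ((y, x) \<in> L)"

lemma abs_ballot_margin_le: "\<bar>ballot_margin L x y\<bar> \<le> 1"
  by (simp add: ballot_margin_def)

lemma ballot_margin_converse: "ballot_margin (L\<inverse>) x y = - ballot_margin L x y"
  by (simp add: ballot_margin_def)

lemma margin_eq_sum_ballot_margin:
  assumes "finite (voters P)"
  shows "margin P x y = (\<Sum>i\<in>voters P. ballot_margin (prefs P i) x y)"
  using assms by (simp add: margin_def support_def ballot_margin_def sum_subtractf Int_def)

lemma margin_add_voter:
  assumes "finite (voters P)" "j \<notin> voters P"
  shows "margin (add_voter P j L) x y = margin P x y + ballot_margin L x y"
proof -
  have "margin (add_voter P j L) x y = ballot_margin L x y + (\<Sum>i\<in>voters P. ballot_margin (prefs P i) x y)"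
    using assms by (simp add: margin_eq_sum_ballot_margin add_voter_def) (auto intro!: sum.cong)
  then show ?thesis
    using assms(1) by (simp add: margin_eq_sum_ballot_margin)
qed

lemma is_profile_add_voter:
  "is_profile P \<Longrightarrow> strict_weak_order_on (alts P) L \<Longrightarrow> is_profile (add_voter P j L)"
  by (auto simp: is_profile_def add_voter_def)

lemma margin_self [simp]: "margin P x x = 0"
  by (simp add: margin_def)

lemma margin_swap: "margin P y x = - margin P x y"
  by (simp add: margin_def)

lemma voting_methodD: "voting_method F \<Longrightarrow> is_profile P \<Longrightarrow> F P \<noteq> {} \<and> F P \<subseteq> alts P"
  unfolding voting_method_def by blast

lemma ordinal_margin_invariantD:
  "ordinal_margin_invariant F \<Longrightarrow> is_profile P \<Longrightarrow> is_profile P' \<Longrightarrow>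
    ordinal_margin_graph P = ordinal_margin_graph P' \<Longrightarrow> F P = F P'"
  unfolding ordinal_margin_invariant_def by blast

definition profile_of :: "'v set \<Rightarrow> 'x set \<Rightarrow> ('v \<Rightarrow> ('x \<times> 'x) set) \<Rightarrow> ('v, 'x) profile" where
  "profile_of V X p = \<lparr>voters = V, alts = X, prefs = (\<lambda>i. if i \<in> V then p i else {})\<rparr>"

lemma voters_profile_of [simp]: "voters (profile_of V X p) = V"
  and alts_profile_of [simp]: "alts (profile_of V X p) = X"
  by (simp_all add: profile_of_def)

lemma margin_profile_of:
  "finite V \<Longrightarrow> margin (profile_of V X p) x y = (\<Sum>i\<in>V. ballot_margin (p i) x y)"
  by (simp add: margin_eq_sum_ballot_margin profile_of_def)

lemma is_profile_profile_of:
  assumes "finite V" "V \<noteq> {}" "finite X" "X \<noteq> {}" "\<And>i. i \<in> V \<Longrightarrow> strict_weak_order_on X (p i)"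
  shows "is_profile (profile_of V X p)"
  using assms by (simp add: is_profile_def profile_of_def)

lemma is_linear_profile_profile_of:
  assumes "finite V" "V \<noteq> {}" "finite X" "X \<noteq> {}" "\<And>i. i \<in> V \<Longrightarrow> linear_order_on' X (p i)"
  shows "is_linear_profile (profile_of V X p)"
proof -
  have "is_profile (profile_of V X p)"
    using assms by (intro is_profile_profile_of) (auto simp: linear_order_on'_def)
  then show ?thesis
    using assms(5) by (simp add: is_linear_profile_def profile_of_def)
qed

lemma inj_on_profile_of: "inj_on (profile_of V X) (PiE V A)"
proof (rule inj_onI)
  fix p p' assume p: "p \<in> PiE V A" "p' \<in> PiE V A" and eq: "profile_of V X p = profile_of V X p'"
  have "p i = p' i" if "i \<in> V" for i
    using arg_cong[OF eq, of "\<lambda>P. prefs P i"] that by (simp add: profile_of_def)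
  then show "p = p'"
    using p by (auto intro: PiE_ext)
qed

section \<open>Profiles given by lists of ballots\<close>

lemma linear_order_on'I:
  assumes "R \<subseteq> X \<times> X" "\<And>a. (a, a) \<notin> R" "\<And>a b c. (a, b) \<in> R \<Longrightarrow> (b, c) \<in> R \<Longrightarrow> (a, c) \<in> R"
    and "\<And>a b. a \<in> X \<Longrightarrow> b \<in> X \<Longrightarrow> a \<noteq> b \<Longrightarrow> (a, b) \<in> R \<or> (b, a) \<in> R"
  shows "linear_order_on' X R"
proof -
  have "(a, c) \<in> R \<or> (c, b) \<in> R" if ab: "(a, b) \<in> R" and "c \<in> X" for a b c
  proof (cases "c = a \<or> c = b")
    case True
    then show ?thesis using ab by blast
  next
    case False
    moreover have "a \<in> X" using ab assms(1) by blast
    ultimately have "(a, c) \<in> R \<or> (c, a) \<in> R" using assms(4) \<open>c \<in> X\<close> by blast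
    then show ?thesis using ab assms(3) by blast
  qed
  moreover have "\<forall>a\<in>X. \<forall>b\<in>X. \<forall>c\<in>X. (a, b) \<in> R \<and> (b, c) \<in> R \<longrightarrow> (a, c) \<in> R"
    using assms(3) by blast
  ultimately show ?thesis
    unfolding linear_order_on'_def strict_weak_order_on_def using assms(1,2,4) by blast
qed

fun ranking :: "'x list \<Rightarrow> ('x \<times> 'x) set" where
  "ranking [] = {}"
| "ranking (x # xs) = {x} \<times> set xs \<union> ranking xs"

lemma ranking_subset: "ranking xs \<subseteq> set xs \<times> set xs"
  by (induction xs) auto

lemma linear_order_on'_ranking:
  assumes "distinct xs"
  shows "linear_order_on' (set xs) (ranking xs)"
proof (rule linear_order_on'I[OF ranking_subset])
  show "(u, u) \<notin> ranking xs" for u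
    using assms ranking_subset by (induction xs) auto
  show "(u, w) \<in> ranking xs" if "(u, v) \<in> ranking xs" "(v, w) \<in> ranking xs" for u v w
    using assms that
  proof (induction xs)
    case (Cons x xs)
    then have "v \<noteq> x" and "(v, w) \<in> ranking xs"
      using ranking_subset by fastforce+
    then show ?case
      using Cons ranking_subset by auto
  qed simp
  show "(u, v) \<in> ranking xs \<or> (v, u) \<in> ranking xs" if "u \<in> set xs" "v \<in> set xs" "u \<noteq> v" for u v
    using that by (induction xs) auto
qed

definition list_profile :: "(nat \<Rightarrow> 'v) \<Rightarrow> 'x set \<Rightarrow> ('x \<times> 'x) set list \<Rightarrow> ('v, 'x) profile" where
  "list_profile voter X Ls = profile_of (voter ` {..<length Ls}) X (\<lambda>i. Ls ! inv voter i)"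

lemma alts_list_profile [simp]: "alts (list_profile voter X Ls) = X"
  by (simp add: list_profile_def)

context
  fixes voter :: "nat \<Rightarrow> 'v"
  assumes inj_voter: "inj voter"
begin

lemma margin_list_profile:
  "margin (list_profile voter X Ls) x y = (\<Sum>L\<leftarrow>Ls. ballot_margin L x y)"
proof -
  have "margin (list_profile voter X Ls) x y = (\<Sum>i\<in>voter ` {..<length Ls}. ballot_margin (Ls ! inv voter i) x y)"
    by (simp add: list_profile_def margin_profile_of)
  also have "\<dots> = (\<Sum>k<length Ls. ballot_margin (Ls ! k) x y)"
    by (simp add: sum.reindex inj_on_subset[OF inj_voter] inv_f_f[OF inj_voter])
  also have "\<dots> = (\<Sum>L\<leftarrow>Ls. ballot_margin L x y)"
    by (simp add: sum_list_sum_nth atLeast0LessThan)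
  finally show ?thesis .
qed

lemma list_profile_snoc:
  "list_profile voter X (Ls @ [L]) = add_voter (list_profile voter X Ls) (voter (length Ls)) L"
proof -
  let ?n = "length Ls"
  have "(\<lambda>i. if i \<in> voter ` {..<Suc ?n} then (Ls @ [L]) ! inv voter i else {})
      = (\<lambda>i. if i \<in> voter ` {..<?n} then Ls ! inv voter i else {})(voter ?n := L)"
  proof
    fix i
    show "(if i \<in> voter ` {..<Suc ?n} then (Ls @ [L]) ! inv voter i else {})
      = ((\<lambda>i. if i \<in> voter ` {..<?n} then Ls ! inv voter i else {})(voter ?n := L)) i"
    proof (cases "i = voter ?n")
      case True
      then show ?thesis by (simp add: inv_f_f[OF inj_voter])
    next
      case False
      then have "i \<in> voter ` {..<Suc ?n} \<longleftrightarrow> i \<in> voter ` {..<?n}"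
        by (auto simp: lessThan_Suc)
      moreover have "(Ls @ [L]) ! inv voter i = Ls ! inv voter i" if "i \<in> voter ` {..<?n}"
        using that by (auto simp: inv_f_f[OF inj_voter] nth_append)
      ultimately show ?thesis
        using False by simp
    qed
  qed
  then show ?thesis
    by (simp add: list_profile_def profile_of_def add_voter_def lessThan_Suc)
qed

lemma is_linear_profile_list_profile:
  assumes "finite X" "X \<noteq> {}" "Ls \<noteq> []" "\<forall>L\<in>set Ls. linear_order_on' X L"
  shows "is_linear_profile (list_profile voter X Ls)"
  unfolding list_profile_def using assms inj_voter by (intro is_linear_profile_profile_of) auto

lemma positive_involvement_replicate:
  assumes "positive_involvement F" "is_profile (list_profile voter X Ls)"
    and "x \<in> F (list_profile voter X Ls)"
    and "strict_weak_order_on X L" "\<forall>y\<in>X - {x}. (x, y) \<in> L"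
  shows "x \<in> F (list_profile voter X (Ls @ replicate k L)) \<and> is_profile (list_profile voter X (Ls @ replicate k L))"
proof (induction k)
  case 0
  then show ?case using assms by simp
next
  case (Suc k)
  let ?Q = "list_profile voter X (Ls @ replicate k L)"
  let ?j = "voter (length (Ls @ replicate k L))"
  have fresh: "?j \<notin> voters ?Q"
    using inj_voter by (auto simp: list_profile_def inj_eq)
  have "Ls @ replicate (Suc k) L = (Ls @ replicate k L) @ [L]"
    by (simp flip: replicate_append_same)
  then have "list_profile voter X (Ls @ replicate (Suc k) L) = add_voter ?Q ?j L"
    by (simp only: list_profile_snoc)
  moreover have "alts ?Q = X"
    by simp
  ultimately show ?case
    using Suc.IH assms(4,5) fresh is_profile_add_voter[of ?Q L ?j]
      positive_involvement_def[THEN iffD1, OF assms(1), rule_format, of ?Q x ?j L]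
    by simp
qed

lemma winner_list_profile_append:
  assumes "positive_involvement F" "is_profile (list_profile voter X Ls)"
    and "x \<in> F (list_profile voter X Ls)"
    and "distinct (x # xs)" "set (x # xs) = X"
  shows "x \<in> F (list_profile voter X (Ls @ replicate k (ranking (x # xs)))) \<and>
    is_profile (list_profile voter X (Ls @ replicate k (ranking (x # xs))))"
proof (rule positive_involvement_replicate[OF assms(1-3)])
  show "strict_weak_order_on X (ranking (x # xs))"
    using linear_order_on'_ranking[OF assms(4)] assms(5) by (simp add: linear_order_on'_def)
  show "\<forall>y\<in>X - {x}. (x, y) \<in> ranking (x # xs)"
    using assms(5) by auto
qed

lemma not_winner_if_extension_has_condorcet_winner:
  assumes "positive_involvement F" "condorcet_winner_criterion F"
    and "is_profile (list_profile voter X Ls)"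
    and "distinct (x # xs)" "set (x # xs) = X"
    and "condorcet_winner (list_profile voter X (Ls @ replicate k (ranking (x # xs)))) y" "y \<noteq> x"
  shows "x \<notin> F (list_profile voter X Ls)"
proof
  let ?Q = "list_profile voter X (Ls @ replicate k (ranking (x # xs)))"
  assume "x \<in> F (list_profile voter X Ls)"
  then have "x \<in> F ?Q" "is_profile ?Q"
    using winner_list_profile_append[OF assms(1,3) _ assms(4,5)] by simp_all
  moreover have "F ?Q = {y}"
    using condorcet_winner_criterion_def[THEN iffD1, OF assms(2), rule_format, of ?Q y] assms(6) \<open>is_profile ?Q\<close>
    by simp
  ultimately show False
    using assms(7) by simp
qed

end

section \<open>Ordinal margin graphs\<close>

lemma ordinal_margin_graph_eqI:
  assumes "alts P' = alts P"
    and sign: "\<forall>x\<in>alts P. \<forall>y\<in>alts P. 0 < margin P' x y \<longleftrightarrow> 0 < margin P x y"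
    and order: "\<forall>x\<in>alts P. \<forall>y\<in>alts P. \<forall>u\<in>alts P. \<forall>v\<in>alts P.
      0 < margin P x y \<longrightarrow> 0 < margin P u v \<longrightarrow>
      (margin P' u v < margin P' x y \<longleftrightarrow> margin P u v < margin P x y)"
  shows "ordinal_margin_graph P' = ordinal_margin_graph P"
proof -
  define E where "E = {(x, y). x \<in> alts P \<and> y \<in> alts P \<and> 0 < margin P x y}"
  have edges: "{(x, y). x \<in> alts P \<and> y \<in> alts P \<and> 0 < margin P' x y} = E"
    using sign by (auto simp: E_def)
  have "{((x, y), (u, v)). (x, y) \<in> E \<and> (u, v) \<in> E \<and> margin P' u v < margin P' x y}
      = {((x, y), (u, v)). (x, y) \<in> E \<and> (u, v) \<in> E \<and> margin P u v < margin P x y}"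
    using order unfolding E_def by (intro set_eqI) (clarsimp, blast)
  then show ?thesis
    by (simp only: ordinal_margin_graph_def Let_def assms(1) edges flip: E_def)
qed

lemma ordinal_margin_graph_eq_if_margins_eq:
  assumes "alts P' = alts P" "\<And>x y. x \<in> alts P \<Longrightarrow> y \<in> alts P \<Longrightarrow> margin P' x y = margin P x y"
  shows "ordinal_margin_graph P' = ordinal_margin_graph P"
  using assms by (intro ordinal_margin_graph_eqI) auto

definition margin_separated :: "int \<Rightarrow> ('v, 'x) profile \<Rightarrow> bool" where
  "margin_separated g P \<longleftrightarrow>
     (\<forall>x\<in>alts P. \<forall>y\<in>alts P. x \<noteq> y \<longrightarrow> g \<le> \<bar>margin P x y\<bar>) \<and>
     (\<forall>x\<in>alts P. \<forall>y\<in>alts P. \<forall>u\<in>alts P. \<forall>v\<in>alts P.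
        0 < margin P x y \<longrightarrow> 0 < margin P u v \<longrightarrow> (x, y) \<noteq> (u, v) \<longrightarrow>
        g \<le> \<bar>margin P x y - margin P u v\<bar>)"

lemma margin_separatedD:
  assumes "margin_separated g P" "x \<in> alts P" "y \<in> alts P"
  shows "x \<noteq> y \<Longrightarrow> g \<le> \<bar>margin P x y\<bar>"
    and "u \<in> alts P \<Longrightarrow> v \<in> alts P \<Longrightarrow> 0 < margin P x y \<Longrightarrow> 0 < margin P u v \<Longrightarrow>
      (x, y) \<noteq> (u, v) \<Longrightarrow> g \<le> \<bar>margin P x y - margin P u v\<bar>"
  using assms unfolding margin_separated_def by blast+

lemma less_iff_less_if_close:
  fixes a b a' b' g s :: real
  assumes "0 < g" "g \<le> \<bar>a - b\<bar>" "0 < s" "\<bar>a' - s * a\<bar> < s * g / 2" "\<bar>b' - s * b\<bar> < s * g / 2"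
  shows "a' < b' \<longleftrightarrow> a < b"
proof -
  have gap: "s * g \<le> \<bar>s * a - s * b\<bar>"
    using assms(2,3) by (simp add: abs_mult flip: right_diff_distrib)
  have a': "s * a - s * g / 2 < a'" "a' < s * a + s * g / 2"
    using assms(4) unfolding abs_less_iff by linarith+
  have b': "s * b - s * g / 2 < b'" "b' < s * b + s * g / 2"
    using assms(5) unfolding abs_less_iff by linarith+
  show ?thesis
  proof (cases "a < b")
    case True
    then have "s * g \<le> s * b - s * a"
      using gap assms(3) by (simp add: abs_if)
    then show ?thesis using True a' b' by simp
  next
    case False
    then have "s * g \<le> s * a - s * b"
      using gap assms(3) by (simp add: abs_if)
    then show ?thesis using False a' b' by simp
  qed
qed

lemma ordinal_margin_graph_eq_if_close:
  fixes s :: real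
  assumes "alts P' = alts P" "margin_separated g P" "0 < g" "0 < s"
    and close: "\<And>x y. x \<in> alts P \<Longrightarrow> y \<in> alts P \<Longrightarrow>
      \<bar>margin P' x y - s * margin P x y\<bar> < s * g / 2"
  shows "ordinal_margin_graph P' = ordinal_margin_graph P"
proof (rule ordinal_margin_graph_eqI[OF assms(1)]; intro ballI impI)
  fix x y assume xy: "x \<in> alts P" "y \<in> alts P"
  show "0 < margin P' x y \<longleftrightarrow> 0 < margin P x y"
  proof (cases "x = y")
    case False
    then have "g \<le> \<bar>margin P x y\<bar>"
      using margin_separatedD(1)[OF assms(2) xy] by simp
    then show ?thesis
      using less_iff_less_if_close[of g 0 "margin P x y" s 0 "margin P' x y"] assms(3,4) close[OF xy]
      by simp
  qed (use assms(1) in simp)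
  fix u v assume uv: "u \<in> alts P" "v \<in> alts P" and pos: "0 < margin P x y" "0 < margin P u v"
  show "margin P' u v < margin P' x y \<longleftrightarrow> margin P u v < margin P x y"
  proof (cases "(x, y) = (u, v)")
    case False
    then have "g \<le> \<bar>margin P u v - margin P x y\<bar>"
      using margin_separatedD(2)[OF assms(2) xy uv pos] by (simp add: abs_minus_commute)
    then show ?thesis
      using less_iff_less_if_close[of g "margin P u v" "margin P x y" s "margin P' u v" "margin P' x y"]
        assms(3,4) close[OF xy] close[OF uv]
      by simp
  qed simp
qed

lemma card_winners_le_1_if_single_voter_resolvable:
  assumes "single_voter_resolvable F" "ordinal_margin_invariant F"
    and P: "is_profile P" "margin_separated g P" "2 < g"
  shows "card (F P) \<le> 1"
proof (rule ccontr)
  assume "\<not> card (F P) \<le> 1"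
  then have "\<exists>j L. j \<notin> voters P \<and> strict_weak_order_on (alts P) L \<and> card (F (add_voter P j L)) = 1"
    using assms(1) P(1) unfolding single_voter_resolvable_def by simp
  then obtain j L where j: "j \<notin> voters P" "strict_weak_order_on (alts P) L"
    and resolved: "card (F (add_voter P j L)) = 1"
    by blast
  have "finite (voters P)"
    using P(1) by (simp add: is_profile_def)
  then have "\<bar>margin (add_voter P j L) x y - margin P x y\<bar> \<le> 1" for x y
    using margin_add_voter[OF _ j(1)] abs_ballot_margin_le by simp
  then have close: "\<bar>real_of_int (margin (add_voter P j L) x y) - real_of_int (margin P x y)\<bar> \<le> 1" for x y
    by (metis of_int_abs of_int_diff of_int_le_1_iff)
  have "ordinal_margin_graph (add_voter P j L) = ordinal_margin_graph P"
  proof (rule ordinal_margin_graph_eq_if_close[OF _ P(2), where s = 1])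
    fix x y
    show "\<bar>real_of_int (margin (add_voter P j L) x y) - 1 * real_of_int (margin P x y)\<bar> < 1 * real_of_int g / 2"
      using close[of x y] P(3) by simp
  qed (use P(3) in \<open>simp_all add: add_voter_def\<close>)
  then have "F (add_voter P j L) = F P"
    using ordinal_margin_invariantD[OF assms(2) is_profile_add_voter[OF P(1) j(2)] P(1)] by simp
  then show False
    using resolved \<open>\<not> card (F P) \<le> 1\<close> by simp
qed

section \<open>Random linear profiles\<close>

lemma sum_UN_le:
  fixes f :: "'a \<Rightarrow> real"
  assumes "finite E" "\<And>e. e \<in> E \<Longrightarrow> finite (B e)" "\<And>x. x \<in> (\<Union>e\<in>E. B e) \<Longrightarrow> 0 \<le> f x"
  shows "sum f (\<Union>e\<in>E. B e) \<le> (\<Sum>e\<in>E. sum f (B e))"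
  using assms
proof (induction E rule: finite_induct)
  case (insert e E)
  let ?U = "\<Union>e\<in>E. B e"
  have "sum f (B e \<union> ?U) = sum f (B e) + sum f ?U - sum f (B e \<inter> ?U)"
    using insert by (intro sum_Un) auto
  moreover have "0 \<le> sum f (B e \<inter> ?U)"
    using insert.prems(2) by (intro sum_nonneg) auto
  moreover have "sum f ?U \<le> (\<Sum>e\<in>E. sum f (B e))"
    using insert by simp
  ultimately show ?case
    using insert by simp
qed simp

lemma sum_PiE_prod_power:
  fixes f :: "'r \<Rightarrow> 'a::comm_semiring_1"
  assumes "finite V" "finite S"
  shows "(\<Sum>p\<in>PiE V (\<lambda>_. S). \<Prod>i\<in>V. f (p i)) = (\<Sum>r\<in>S. f r) ^ card V"
  using prod_sum_PiE[of V "\<lambda>_. S" "\<lambda>_. f"] assms by simp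

lemma sum_PiE_prod_mult_pair:
  fixes q g :: "'r \<Rightarrow> real"
  assumes V: "finite V" "i \<in> V" "j \<in> V" and S: "finite S" "(\<Sum>r\<in>S. q r) = 1"
  shows "(\<Sum>p\<in>PiE V (\<lambda>_. S). (\<Prod>k\<in>V. q (p k)) * (g (p i) * g (p j))) =
    (if i = j then (\<Sum>r\<in>S. q r * (g r)\<^sup>2) else (\<Sum>r\<in>S. q r * g r)\<^sup>2)"
proof -
  define f where "f k r = q r * (if k = i then g r else 1) * (if k = j then g r else 1)" for k r
  have "(\<Prod>k\<in>V. f k (p k)) = (\<Prod>k\<in>V. q (p k)) * (g (p i) * g (p j))" for p
    using V by (simp add: f_def prod.distrib)
  then have "(\<Sum>p\<in>PiE V (\<lambda>_. S). (\<Prod>k\<in>V. q (p k)) * (g (p i) * g (p j)))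
      = (\<Prod>k\<in>V. \<Sum>r\<in>S. f k r)"
    using prod_sum_PiE[of V "\<lambda>_. S" f] V S by simp
  also have "\<dots> = (if i = j then (\<Sum>r\<in>S. q r * (g r)\<^sup>2) else (\<Sum>r\<in>S. q r * g r)\<^sup>2)"
  proof (cases "i = j")
    case True
    then have "(\<Sum>r\<in>S. f k r) = (if k = i then (\<Sum>r\<in>S. q r * (g r)\<^sup>2) else 1)" for k
      using S by (simp add: f_def power2_eq_square mult.assoc)
    then show ?thesis
      using True V by simp
  next
    case False
    then have "(\<Sum>r\<in>S. f k r) =
        (if k = i then (\<Sum>r\<in>S. q r * g r) else 1) * (if k = j then (\<Sum>r\<in>S. q r * g r) else 1)" for k
      using S by (simp add: f_def)
    then show ?thesis
      using False V by (simp add: prod.distrib power2_eq_square)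
  qed
  finally show ?thesis .
qed

lemma second_moment_sum_PiE:
  fixes q g :: "'r \<Rightarrow> real"
  assumes "finite V" "finite S" "(\<Sum>r\<in>S. q r) = 1" "(\<Sum>r\<in>S. q r * g r) = 0"
  shows "(\<Sum>p\<in>PiE V (\<lambda>_. S). (\<Prod>k\<in>V. q (p k)) * (\<Sum>i\<in>V. g (p i))\<^sup>2) =
    card V * (\<Sum>r\<in>S. q r * (g r)\<^sup>2)"
proof -
  have "(\<Sum>p\<in>PiE V (\<lambda>_. S). (\<Prod>k\<in>V. q (p k)) * (\<Sum>i\<in>V. g (p i))\<^sup>2)
      = (\<Sum>p\<in>PiE V (\<lambda>_. S). \<Sum>i\<in>V. \<Sum>j\<in>V. (\<Prod>k\<in>V. q (p k)) * (g (p i) * g (p j)))"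
    by (intro sum.cong refl) (simp only: power2_eq_square sum_product, simp only: sum_distrib_left)
  also have "\<dots> = (\<Sum>i\<in>V. \<Sum>j\<in>V. \<Sum>p\<in>PiE V (\<lambda>_. S). (\<Prod>k\<in>V. q (p k)) * (g (p i) * g (p j)))"
    by (simp add: sum.swap[of _ "PiE V (\<lambda>_. S)"] sum.swap[of _ "PiE V (\<lambda>_. S)" V])
  also have "\<dots> = (\<Sum>i\<in>V. \<Sum>j\<in>V. if i = j then (\<Sum>r\<in>S. q r * (g r)\<^sup>2) else 0)"
    using assms by (intro sum.cong refl) (simp add: sum_PiE_prod_mult_pair)
  also have "\<dots> = card V * (\<Sum>r\<in>S. q r * (g r)\<^sup>2)"
    using assms(1) by simp
  finally show ?thesis .
qed

lemma chebyshev_sum_PiE: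
  fixes q h :: "'r \<Rightarrow> real"
  assumes V: "finite V" and S: "finite S" "\<forall>r\<in>S. 0 \<le> q r" "(\<Sum>r\<in>S. q r) = 1" and "0 < t"
  shows "(\<Sum>p\<in>{p\<in>PiE V (\<lambda>_. S). t \<le> \<bar>(\<Sum>i\<in>V. h (p i)) - card V * (\<Sum>r\<in>S. q r * h r)\<bar>}.
      \<Prod>k\<in>V. q (p k)) \<le> card V * (\<Sum>r\<in>S. q r * (h r)\<^sup>2) / t\<^sup>2"
proof -
  define \<mu> where "\<mu> = (\<Sum>r\<in>S. q r * h r)"
  define g where "g r = h r - \<mu>" for r
  let ?Q = "\<lambda>p. \<Prod>k\<in>V. q (p k)"
  have Q_nonneg: "0 \<le> ?Q p" if "p \<in> PiE V (\<lambda>_. S)" for p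
    using that S(2) by (auto intro: prod_nonneg)
  have centered: "(\<Sum>r\<in>S. q r * g r) = 0"
    using S(3) by (simp add: g_def \<mu>_def right_diff_distrib sum_subtractf flip: sum_distrib_right)
  have sum_g: "(\<Sum>i\<in>V. g (p i)) = (\<Sum>i\<in>V. h (p i)) - card V * \<mu>" for p
    by (simp add: g_def sum_subtractf)
  have variance: "(\<Sum>r\<in>S. q r * (g r)\<^sup>2) \<le> (\<Sum>r\<in>S. q r * (h r)\<^sup>2)"
  proof -
    have "(\<Sum>r\<in>S. q r * (g r)\<^sup>2) =
        (\<Sum>r\<in>S. q r * (h r)\<^sup>2) - 2 * \<mu> * (\<Sum>r\<in>S. q r * h r) + \<mu>\<^sup>2 * (\<Sum>r\<in>S. q r)"
      by (simp add: g_def power2_eq_square algebra_simps sum.distrib sum_subtractf sum_distrib_left)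
    also have "\<dots> = (\<Sum>r\<in>S. q r * (h r)\<^sup>2) - \<mu>\<^sup>2"
      using S(3) by (simp add: \<mu>_def power2_eq_square)
    finally show ?thesis by simp
  qed
  have "(\<Sum>p\<in>{p\<in>PiE V (\<lambda>_. S). t \<le> \<bar>\<Sum>i\<in>V. g (p i)\<bar>}. ?Q p)
      \<le> (\<Sum>p\<in>{p\<in>PiE V (\<lambda>_. S). t \<le> \<bar>\<Sum>i\<in>V. g (p i)\<bar>}. ?Q p * ((\<Sum>i\<in>V. g (p i))\<^sup>2 / t\<^sup>2))"
  proof (rule sum_mono)
    fix p assume p: "p \<in> {p\<in>PiE V (\<lambda>_. S). t \<le> \<bar>\<Sum>i\<in>V. g (p i)\<bar>}"
    then have "1 \<le> (\<Sum>i\<in>V. g (p i))\<^sup>2 / t\<^sup>2"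
      using \<open>0 < t\<close> by (simp add: abs_le_square_iff[symmetric])
    moreover have "0 \<le> ?Q p"
      using Q_nonneg p by simp
    ultimately show "?Q p \<le> ?Q p * ((\<Sum>i\<in>V. g (p i))\<^sup>2 / t\<^sup>2)"
      using mult_left_mono[of 1 "(\<Sum>i\<in>V. g (p i))\<^sup>2 / t\<^sup>2" "?Q p"] by simp
  qed
  also have "\<dots> \<le> (\<Sum>p\<in>PiE V (\<lambda>_. S). ?Q p * (\<Sum>i\<in>V. g (p i))\<^sup>2) / t\<^sup>2"
    using V S Q_nonneg by (auto simp: sum_divide_distrib intro!: sum_mono2 finite_PiE)
  also have "\<dots> = card V * (\<Sum>r\<in>S. q r * (g r)\<^sup>2) / t\<^sup>2"
    using second_moment_sum_PiE[OF V S(1,3) centered] by simp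
  also have "\<dots> \<le> card V * (\<Sum>r\<in>S. q r * (h r)\<^sup>2) / t\<^sup>2"
    using variance by (simp add: divide_right_mono mult_left_mono)
  finally show ?thesis
    by (simp add: sum_g \<mu>_def)
qed

lemma mass_near_means_PiE:
  fixes q :: "'r \<Rightarrow> real" and D :: "'e \<Rightarrow> 'r \<Rightarrow> real"
  assumes V: "finite V" and S: "finite S" "\<forall>r\<in>S. 0 \<le> q r" "(\<Sum>r\<in>S. q r) = 1" and E: "finite E"
    and D_bound: "\<And>e r. e \<in> E \<Longrightarrow> r \<in> S \<Longrightarrow> \<bar>D e r\<bar> \<le> 1" and "0 < t"
  shows "1 - real (card E) * real (card V) / t\<^sup>2 \<le>
    (\<Sum>p\<in>{p\<in>PiE V (\<lambda>_. S). \<forall>e\<in>E. \<bar>(\<Sum>i\<in>V. D e (p i)) - card V * (\<Sum>r\<in>S. q r * D e r)\<bar> < t}.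
      \<Prod>k\<in>V. q (p k))"
proof -
  let ?Pi = "PiE V (\<lambda>_. S)"
  let ?Q = "\<lambda>p. \<Prod>k\<in>V. q (p k)"
  define near where
    "near = {p\<in>?Pi. \<forall>e\<in>E. \<bar>(\<Sum>i\<in>V. D e (p i)) - card V * (\<Sum>r\<in>S. q r * D e r)\<bar> < t}"
  define far where
    "far e = {p\<in>?Pi. t \<le> \<bar>(\<Sum>i\<in>V. D e (p i)) - card V * (\<Sum>r\<in>S. q r * D e r)\<bar>}" for e
  have fin: "finite ?Pi"
    using V S by (simp add: finite_PiE)
  have far_mass: "sum ?Q (far e) \<le> card V / t\<^sup>2" if "e \<in> E" for e
  proof -
    have "(\<Sum>r\<in>S. q r * (D e r)\<^sup>2) \<le> (\<Sum>r\<in>S. q r)"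
      using S(2) D_bound[OF that] by (intro sum_mono mult_right_le_one_le) (auto simp: abs_square_le_1)
    then have "card V * (\<Sum>r\<in>S. q r * (D e r)\<^sup>2) / t\<^sup>2 \<le> card V / t\<^sup>2"
      using S(3) by (simp add: divide_right_mono mult_left_le)
    then show ?thesis
      using chebyshev_sum_PiE[OF V S \<open>0 < t\<close>, of "D e"] by (simp add: far_def)
  qed
  have far_union: "?Pi - near = (\<Union>e\<in>E. far e)"
    by (auto simp: near_def far_def not_less)
  have "sum ?Q (?Pi - near) \<le> (\<Sum>e\<in>E. sum ?Q (far e))"
    unfolding far_union using E fin S(2)
    by (intro sum_UN_le) (auto simp: far_def intro: prod_nonneg rev_finite_subset[OF fin])
  also have "\<dots> \<le> card E * (card V / t\<^sup>2)"
    using sum_mono[OF far_mass] by simp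
  finally have "sum ?Q (?Pi - near) \<le> card E * card V / t\<^sup>2"
    by simp
  moreover have "sum ?Q ?Pi = sum ?Q (?Pi - near) + sum ?Q near"
    using fin by (intro sum.subset_diff) (auto simp: near_def)
  moreover have "sum ?Q ?Pi = 1"
    using sum_PiE_prod_power[OF V S(1), of q] S(3) by simp
  ultimately show ?thesis
    by (simp add: near_def)
qed

lemma squared_mass_le_card_PiE:
  fixes q :: "'r \<Rightarrow> real"
  assumes "finite V" "finite S" "G \<subseteq> PiE V (\<lambda>_. S)"
  shows "(\<Sum>p\<in>G. \<Prod>k\<in>V. q (p k))\<^sup>2 \<le> card G * (\<Sum>r\<in>S. (q r)\<^sup>2) ^ card V"
proof -
  have "(\<Sum>p\<in>G. (\<Prod>k\<in>V. q (p k))\<^sup>2) \<le> (\<Sum>p\<in>PiE V (\<lambda>_. S). \<Prod>k\<in>V. (q (p k))\<^sup>2)"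
    using assms by (auto simp: prod_power_distrib intro!: sum_mono2 finite_PiE prod_nonneg)
  also have "\<dots> = (\<Sum>r\<in>S. (q r)\<^sup>2) ^ card V"
    using assms(1,2) by (rule sum_PiE_prod_power)
  finally have "(\<Sum>p\<in>G. (\<Prod>k\<in>V. q (p k))\<^sup>2) * card G \<le> (\<Sum>r\<in>S. (q r)\<^sup>2) ^ card V * card G"
    by (rule mult_right_mono) simp
  with sum_squared_le_sum_of_squares[of "\<lambda>p. \<Prod>k\<in>V. q (p k)" G] show ?thesis
    by (simp add: mult.commute)
qed

lemma tilted_weights:
  fixes w f :: "'r \<Rightarrow> real"
  assumes S: "finite S" "S \<noteq> {}" and w: "(\<Sum>r\<in>S. w r) = 0" "\<And>r. r \<in> S \<Longrightarrow> \<eta> * \<bar>w r\<bar> \<le> 1"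
    and "0 \<le> \<eta>"
  defines "q \<equiv> \<lambda>r. (1 + \<eta> * w r) / card S"
  shows "\<forall>r\<in>S. 0 \<le> q r" and "(\<Sum>r\<in>S. q r) = 1"
    and "(\<Sum>r\<in>S. q r * f r) = ((\<Sum>r\<in>S. f r) + \<eta> * (\<Sum>r\<in>S. w r * f r)) / card S"
    and "(\<Sum>r\<in>S. (q r)\<^sup>2) = (1 + \<eta>\<^sup>2 * (\<Sum>r\<in>S. (w r)\<^sup>2) / card S) / card S"
proof -
  have N: "0 < real (card S)"
    using S by (simp add: card_gt_0_iff)
  show "\<forall>r\<in>S. 0 \<le> q r"
  proof
    fix r assume "r \<in> S"
    have "- (\<eta> * \<bar>w r\<bar>) \<le> \<eta> * w r"
      using \<open>0 \<le> \<eta>\<close> by (simp add: mult_left_mono flip: mult_minus_right)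
    then show "0 \<le> q r"
      using w(2)[OF \<open>r \<in> S\<close>] by (simp add: q_def)
  qed
  show "(\<Sum>r\<in>S. q r) = 1"
    using w(1) N by (simp add: q_def sum.distrib flip: sum_divide_distrib sum_distrib_left)
  show "(\<Sum>r\<in>S. q r * f r) = ((\<Sum>r\<in>S. f r) + \<eta> * (\<Sum>r\<in>S. w r * f r)) / card S"
    by (simp add: q_def algebra_simps sum.distrib sum_distrib_left flip: sum_divide_distrib)
  have "(\<Sum>r\<in>S. (q r)\<^sup>2) = (\<Sum>r\<in>S. 1 + 2 * \<eta> * w r + \<eta>\<^sup>2 * (w r)\<^sup>2) / (card S)\<^sup>2"
    by (simp add: q_def power2_eq_square algebra_simps flip: sum_divide_distrib)
  also have "\<dots> = (card S + \<eta>\<^sup>2 * (\<Sum>r\<in>S. (w r)\<^sup>2)) / (card S)\<^sup>2"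
    using w(1) by (simp add: sum.distrib flip: sum_distrib_left)
  also have "\<dots> = (1 + \<eta>\<^sup>2 * (\<Sum>r\<in>S. (w r)\<^sup>2) / card S) / card S"
    using N by (simp add: power2_eq_square field_simps)
  finally show "(\<Sum>r\<in>S. (q r)\<^sup>2) = (1 + \<eta>\<^sup>2 * (\<Sum>r\<in>S. (w r)\<^sup>2) / card S) / card S" .
qed

lemma tilted_mass_near_target:
  fixes D :: "'e \<Rightarrow> 'r \<Rightarrow> real" and w :: "'r \<Rightarrow> real" and \<eta> :: real
  assumes S: "finite S" "S \<noteq> {}" and E: "finite E" and V: "finite V"
    and D_bound: "\<And>e r. e \<in> E \<Longrightarrow> r \<in> S \<Longrightarrow> \<bar>D e r\<bar> \<le> 1"
    and D_sum: "\<And>e. e \<in> E \<Longrightarrow> (\<Sum>r\<in>S. D e r) = 0"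
    and w: "(\<Sum>r\<in>S. w r) = 0" "\<And>r. r \<in> S \<Longrightarrow> \<eta> * \<bar>w r\<bar> \<le> 1"
    and \<eta>: "0 < \<eta>" "8 * real (card S) ^ 2 * (real (card E) + 1) \<le> \<eta>\<^sup>2 * real (card V)"
  defines "q \<equiv> \<lambda>r. (1 + \<eta> * w r) / card S" and "s \<equiv> real (card V) * \<eta> / real (card S)"
  shows "1 / 2 \<le> (\<Sum>p\<in>{p \<in> PiE V (\<lambda>_. S).
    \<forall>e\<in>E. \<bar>(\<Sum>i\<in>V. D e (p i)) - s * (\<Sum>r\<in>S. w r * D e r)\<bar> < s / 2}. \<Prod>k\<in>V. q (p k))"
proof -
  define N where "N = real (card S)"
  define n where "n = real (card V)"
  have N: "0 < N"
    using S by (simp add: N_def card_gt_0_iff)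
  have "0 < 8 * N\<^sup>2 * (real (card E) + 1)"
    using N by simp
  then have "0 < \<eta>\<^sup>2 * n"
    using \<eta>(2) unfolding N_def n_def by linarith
  then have "0 < s"
    using \<eta>(1) N by (simp add: s_def zero_less_mult_iff n_def N_def)
  have q_eq: "q r = (1 + \<eta> * w r) / card S" for r
    by (simp add: q_def)
  note q = tilted_weights[OF S w less_imp_le[OF \<eta>(1)], folded q_eq]
  have Good: "{p \<in> PiE V (\<lambda>_. S). \<forall>e\<in>E. \<bar>(\<Sum>i\<in>V. D e (p i)) - s * (\<Sum>r\<in>S. w r * D e r)\<bar> < s / 2} =
      {p \<in> PiE V (\<lambda>_. S). \<forall>e\<in>E. \<bar>(\<Sum>i\<in>V. D e (p i)) - card V * (\<Sum>r\<in>S. q r * D e r)\<bar> < s / 2}"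
    using D_sum by (intro Collect_cong conj_cong refl ball_cong) (simp add: q(3) s_def mult.assoc)
  have "1 / 2 \<le> 1 - card E * n / (s / 2)\<^sup>2"
  proof -
    have "8 * N\<^sup>2 * card E \<le> 8 * N\<^sup>2 * (real (card E) + 1)"
      by (intro mult_left_mono) simp_all
    also have "\<dots> \<le> \<eta>\<^sup>2 * n"
      using \<eta>(2) unfolding N_def n_def .
    finally have "4 * N\<^sup>2 * card E / (\<eta>\<^sup>2 * n) \<le> 1 / 2"
      using \<open>0 < \<eta>\<^sup>2 * n\<close> by (simp add: pos_divide_le_eq)
    moreover have "card E * n / (s / 2)\<^sup>2 = 4 * N\<^sup>2 * card E / (\<eta>\<^sup>2 * n)"
      using \<open>0 < \<eta>\<^sup>2 * n\<close> N \<eta>(1) by (simp add: s_def n_def N_def power2_eq_square field_simps)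
    ultimately show ?thesis
      by simp
  qed
  also have "\<dots> \<le> (\<Sum>p\<in>{p \<in> PiE V (\<lambda>_. S).
      \<forall>e\<in>E. \<bar>(\<Sum>i\<in>V. D e (p i)) - card V * (\<Sum>r\<in>S. q r * D e r)\<bar> < s / 2}. \<Prod>k\<in>V. q (p k))"
    using mass_near_means_PiE[where D = D and t = "s / 2", OF V S(1) q(1,2) E D_bound] \<open>0 < s\<close>
    unfolding n_def by simp
  finally show ?thesis
    unfolding Good .
qed

lemma power_div_le_exp: "0 \<le> x \<Longrightarrow> 0 < N \<Longrightarrow> ((1 + x) / N) ^ k \<le> exp (k * x) / N ^ k"
  for x N :: real
  by (simp add: power_divide divide_right_mono power_mono exp_of_nat_mult)

(* Under the tilted ballot weights (1 + \<eta> w r) / |S| every sum of D e concentrates around s times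
   its target, and Cauchy-Schwarz turns the weight of these assignments into a lower bound on their
   number. *)
lemma card_near_tilted_target:
  fixes D :: "'e \<Rightarrow> 'r \<Rightarrow> real" and w :: "'r \<Rightarrow> real" and \<eta> :: real
  assumes S: "finite S" "S \<noteq> {}" and E: "finite E" and V: "finite V"
    and D_bound: "\<And>e r. e \<in> E \<Longrightarrow> r \<in> S \<Longrightarrow> \<bar>D e r\<bar> \<le> 1"
    and D_sum: "\<And>e. e \<in> E \<Longrightarrow> (\<Sum>r\<in>S. D e r) = 0"
    and w: "(\<Sum>r\<in>S. w r) = 0" "\<And>r. r \<in> S \<Longrightarrow> \<eta> * \<bar>w r\<bar> \<le> 1"
    and \<eta>: "0 < \<eta>" "8 * real (card S) ^ 2 * (real (card E) + 1) \<le> \<eta>\<^sup>2 * real (card V)"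
  defines "s \<equiv> real (card V) * \<eta> / real (card S)"
  shows "exp (- (\<eta>\<^sup>2 * real (card V) * (\<Sum>r\<in>S. (w r)\<^sup>2) / real (card S))) / 4 * real (card S) ^ card V \<le>
    real (card {p \<in> PiE V (\<lambda>_. S). \<forall>e\<in>E. \<bar>(\<Sum>i\<in>V. D e (p i)) - s * (\<Sum>r\<in>S. w r * D e r)\<bar> < s / 2})"
proof -
  define N where "N = real (card S)"
  define A where "A = (\<Sum>r\<in>S. (w r)\<^sup>2)"
  define q where "q r = (1 + \<eta> * w r) / card S" for r
  define Good where
    "Good = {p \<in> PiE V (\<lambda>_. S). \<forall>e\<in>E. \<bar>(\<Sum>i\<in>V. D e (p i)) - s * (\<Sum>r\<in>S. w r * D e r)\<bar> < s / 2}"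
  have N: "0 < N"
    using S by (simp add: N_def card_gt_0_iff)
  have "(1 / 2)\<^sup>2 \<le> (\<Sum>p\<in>Good. \<Prod>k\<in>V. q (p k))\<^sup>2"
    using tilted_mass_near_target[OF S E V D_bound D_sum w \<eta>]
    by (intro power_mono) (simp_all add: Good_def q_def s_def)
  also have "\<dots> \<le> card Good * (\<Sum>r\<in>S. (q r)\<^sup>2) ^ card V"
    using V S(1) by (rule squared_mass_le_card_PiE) (simp add: Good_def)
  also have "\<dots> \<le> card Good * (exp (card V * (\<eta>\<^sup>2 * A / N)) / N ^ card V)"
  proof (rule mult_left_mono)
    have "(\<Sum>r\<in>S. (q r)\<^sup>2) = (1 + \<eta>\<^sup>2 * A / N) / N"
      using tilted_weights(4)[OF S w less_imp_le[OF \<eta>(1)]] by (simp add: q_def A_def N_def)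
    moreover have "((1 + \<eta>\<^sup>2 * A / N) / N) ^ card V \<le> exp (card V * (\<eta>\<^sup>2 * A / N)) / N ^ card V"
      using N by (intro power_div_le_exp) (simp_all add: A_def sum_nonneg)
    ultimately show "(\<Sum>r\<in>S. (q r)\<^sup>2) ^ card V \<le> exp (card V * (\<eta>\<^sup>2 * A / N)) / N ^ card V"
      by simp
  qed simp
  finally show ?thesis
    using N by (simp add: Good_def A_def N_def exp_minus field_simps)
qed

(* The tilt \<eta> is of order 1 / sqrt |V|, so the factor lost in card_near_tilted_target stays bounded. *)
lemma many_assignments_near_scaled_centred_target:
  fixes D :: "'e \<Rightarrow> 'r \<Rightarrow> real" and w :: "'r \<Rightarrow> real"
  assumes S: "finite S" "S \<noteq> {}" and E: "finite E"
    and D_bound: "\<And>e r. e \<in> E \<Longrightarrow> r \<in> S \<Longrightarrow> \<bar>D e r\<bar> \<le> 1"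
    and D_sum: "\<And>e. e \<in> E \<Longrightarrow> (\<Sum>r\<in>S. D e r) = 0"
    and w: "(\<Sum>r\<in>S. w r) = 0"
  obtains \<epsilon> :: real and n0 :: nat where "0 < \<epsilon>"
    and "\<And>V :: 'v set. finite V \<Longrightarrow> n0 \<le> card V \<Longrightarrow> \<exists>s>0. \<epsilon> * real (card S) ^ card V \<le>
      real (card {p \<in> PiE V (\<lambda>_. S). \<forall>e\<in>E. \<bar>(\<Sum>i\<in>V. D e (p i)) - s * (\<Sum>r\<in>S. w r * D e r)\<bar> < s / 2})"
proof -
  define N where "N = real (card S)"
  define M where "M = (\<Sum>r\<in>S. \<bar>w r\<bar>)"
  define K where "K = 8 * N\<^sup>2 * (real (card E) + 1)"
  have "0 < K"
    using S by (simp add: K_def N_def card_gt_0_iff)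
  show thesis
  proof (rule that[of "exp (- (K * (\<Sum>r\<in>S. (w r)\<^sup>2) / N)) / 4" "nat \<lceil>K * M\<^sup>2\<rceil> + 1"])
    fix V :: "'v set" assume V: "finite V" "nat \<lceil>K * M\<^sup>2\<rceil> + 1 \<le> card V"
    define \<eta> where "\<eta> = sqrt (K / card V)"
    have "K * M\<^sup>2 < card V"
      using V(2) real_nat_ceiling_ge[of "K * M\<^sup>2"] by linarith
    moreover have "0 \<le> K * M\<^sup>2"
      using \<open>0 < K\<close> by simp
    ultimately have "0 < real (card V)"
      by linarith
    then have \<eta>: "0 < \<eta>" "\<eta>\<^sup>2 * card V = K"
      using \<open>0 < K\<close> by (simp_all add: \<eta>_def)
    have "\<eta> * M = sqrt (K * M\<^sup>2 / card V)"
      by (simp add: \<eta>_def M_def real_sqrt_mult real_sqrt_divide sum_nonneg)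
    also have "\<dots> \<le> 1"
      using \<open>K * M\<^sup>2 < card V\<close> \<open>0 < real (card V)\<close> by simp
    finally have "\<eta> * \<bar>w r\<bar> \<le> 1" if "r \<in> S" for r
      using \<eta>(1) member_le_sum[OF that _ S(1), of "\<lambda>r. \<bar>w r\<bar>"] unfolding M_def
      by (meson abs_ge_zero mult_left_mono order_trans less_imp_le)
    moreover have "0 < real (card V) * \<eta> / real (card S)"
      using \<open>0 < real (card V)\<close> \<eta>(1) S by (simp add: card_gt_0_iff)
    ultimately show "\<exists>s>0. exp (- (K * (\<Sum>r\<in>S. (w r)\<^sup>2) / N)) / 4 * real (card S) ^ card V \<le>
      real (card {p \<in> PiE V (\<lambda>_. S). \<forall>e\<in>E. \<bar>(\<Sum>i\<in>V. D e (p i)) - s * (\<Sum>r\<in>S. w r * D e r)\<bar> < s / 2})"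
      using card_near_tilted_target[where D = D, OF S E V(1) D_bound D_sum w _ \<eta>(1)] \<eta>(2)
      by (intro exI[of _ "real (card V) * \<eta> / real (card S)"]) (simp add: K_def N_def)
  qed simp
qed

(* Centring m leaves the targets unchanged since D e sums to zero. *)
lemma many_assignments_near_scaled_target:
  fixes D :: "'e \<Rightarrow> 'r \<Rightarrow> real" and m :: "'r \<Rightarrow> real"
  assumes S: "finite S" "S \<noteq> {}" and E: "finite E"
    and D_bound: "\<And>e r. e \<in> E \<Longrightarrow> r \<in> S \<Longrightarrow> \<bar>D e r\<bar> \<le> 1"
    and D_sum: "\<And>e. e \<in> E \<Longrightarrow> (\<Sum>r\<in>S. D e r) = 0"
  obtains \<epsilon> :: real and n0 :: nat where "0 < \<epsilon>"
    and "\<And>V :: 'v set. finite V \<Longrightarrow> n0 \<le> card V \<Longrightarrow> \<exists>s>0. \<epsilon> * real (card S) ^ card V \<le>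
      real (card {p \<in> PiE V (\<lambda>_. S). \<forall>e\<in>E. \<bar>(\<Sum>i\<in>V. D e (p i)) - s * (\<Sum>r\<in>S. m r * D e r)\<bar> < s / 2})"
proof -
  define N where "N = real (card S)"
  have N: "0 < N"
    using S by (simp add: N_def card_gt_0_iff)
  define w where "w r = m r - (\<Sum>r\<in>S. m r) / N" for r
  have w_sum: "(\<Sum>r\<in>S. w r) = 0"
    using N by (simp add: w_def sum_subtractf N_def)
  have w_D: "(\<Sum>r\<in>S. w r * D e r) = (\<Sum>r\<in>S. m r * D e r)" if "e \<in> E" for e
  proof -
    have "(\<Sum>r\<in>S. w r * D e r) = (\<Sum>r\<in>S. m r * D e r) - (\<Sum>r\<in>S. m r) / N * (\<Sum>r\<in>S. D e r)"
      by (simp add: w_def left_diff_distrib sum_subtractf sum_distrib_left)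
    then show ?thesis
      using D_sum[OF that] by simp
  qed
  obtain \<epsilon> n0 where "0 < \<epsilon>" and near: "\<And>V :: 'v set. finite V \<Longrightarrow> n0 \<le> card V \<Longrightarrow> \<exists>s>0.
      \<epsilon> * real (card S) ^ card V \<le>
      real (card {p \<in> PiE V (\<lambda>_. S). \<forall>e\<in>E. \<bar>(\<Sum>i\<in>V. D e (p i)) - s * (\<Sum>r\<in>S. w r * D e r)\<bar> < s / 2})"
    using many_assignments_near_scaled_centred_target[where 'v = 'v and D = D, OF S E D_bound D_sum w_sum]
    by blast
  have "{p \<in> PiE V (\<lambda>_. S). \<forall>e\<in>E. \<bar>(\<Sum>i\<in>V. D e (p i)) - s * (\<Sum>r\<in>S. w r * D e r)\<bar> < s / 2}
    = {p \<in> PiE V (\<lambda>_. S). \<forall>e\<in>E. \<bar>(\<Sum>i\<in>V. D e (p i)) - s * (\<Sum>r\<in>S. m r * D e r)\<bar> < s / 2}"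
    for V :: "'v set" and s
    by (intro Collect_cong conj_cong refl ball_cong) (simp add: w_D)
  note targets_eq = this
  show thesis
  proof (rule that[OF \<open>0 < \<epsilon>\<close>])
    fix V :: "'v set" assume "finite V" "n0 \<le> card V"
    then show "\<exists>s>0. \<epsilon> * real (card S) ^ card V \<le>
      real (card {p \<in> PiE V (\<lambda>_. S). \<forall>e\<in>E. \<bar>(\<Sum>i\<in>V. D e (p i)) - s * (\<Sum>r\<in>S. m r * D e r)\<bar> < s / 2})"
      using near unfolding targets_eq by blast
  qed
qed

definition linear_orders :: "'x set \<Rightarrow> ('x \<times> 'x) set set" where
  "linear_orders X = {R. linear_order_on' X R}"

lemma finite_linear_orders: "finite X \<Longrightarrow> finite (linear_orders X)"
proof -
  assume "finite X"
  moreover have "linear_orders X \<subseteq> Pow (X \<times> X)"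
    by (auto simp: linear_orders_def linear_order_on'_def strict_weak_order_on_def)
  ultimately show ?thesis
    by (meson finite_Pow_iff finite_SigmaI finite_subset)
qed

lemma linear_orders_nonempty: "finite X \<Longrightarrow> linear_orders X \<noteq> {}"
  using finite_distinct_list linear_order_on'_ranking by (fastforce simp: linear_orders_def)

lemma linear_order_on'_converse: "linear_order_on' X R \<Longrightarrow> linear_order_on' X (R\<inverse>)"
  unfolding linear_order_on'_def strict_weak_order_on_def by blast

lemma sum_ballot_margin_linear_orders: "(\<Sum>R\<in>linear_orders X. ballot_margin R x y) = 0"
proof -
  have "(\<Sum>R\<in>linear_orders X. ballot_margin R x y) = (\<Sum>R\<in>linear_orders X. ballot_margin (R\<inverse>) x y)"
    by (rule sum.reindex_bij_witness[of _ converse converse])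
      (auto simp: linear_orders_def linear_order_on'_converse)
  then show ?thesis
    by (simp add: ballot_margin_converse sum_negf)
qed

lemma margin_eq_sum_ballot_counts:
  assumes "is_linear_profile P"
  shows "margin P x y =
    (\<Sum>R\<in>linear_orders (alts P). int (card {i \<in> voters P. prefs P i = R}) * ballot_margin R x y)"
proof -
  have fin: "finite (voters P)" "finite (alts P)"
    using assms by (simp_all add: is_linear_profile_def is_profile_def)
  have "prefs P i \<in> linear_orders (alts P)" if "i \<in> voters P" for i
    using assms that by (simp add: is_linear_profile_def linear_orders_def)
  then have "(\<Sum>R\<in>linear_orders (alts P). \<Sum>i | i \<in> voters P \<and> prefs P i = R. ballot_margin (prefs P i) x y)
      = (\<Sum>i\<in>voters P. ballot_margin (prefs P i) x y)"
    using fin by (intro sum.group) (auto simp: finite_linear_orders)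
  then show ?thesis
    using fin(1) by (simp add: margin_eq_sum_ballot_margin)
qed

lemma lin_profiles_eq_image:
  assumes "finite V" "V \<noteq> {}" "finite X" "X \<noteq> {}"
  shows "lin_profiles X V = profile_of V X ` PiE V (\<lambda>_. linear_orders X)"
proof
  show "lin_profiles X V \<subseteq> profile_of V X ` PiE V (\<lambda>_. linear_orders X)"
  proof
    fix P assume "P \<in> lin_profiles X V"
    then have P: "is_linear_profile P" "alts P = X" "voters P = V"
      by (simp_all add: lin_profiles_def)
    then have "P = profile_of V X (restrict (prefs P) V)"
      by (cases P) (auto simp: profile_of_def is_linear_profile_def is_profile_def fun_eq_iff)
    moreover have "restrict (prefs P) V \<in> PiE V (\<lambda>_. linear_orders X)"
      using P by (auto simp: is_linear_profile_def linear_orders_def)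
    ultimately show "P \<in> profile_of V X ` PiE V (\<lambda>_. linear_orders X)"
      by blast
  qed
  show "profile_of V X ` PiE V (\<lambda>_. linear_orders X) \<subseteq> lin_profiles X V"
    using assms by (auto simp: lin_profiles_def linear_orders_def intro!: is_linear_profile_profile_of)
qed

lemma unresolved_proportion_ge:
  assumes V: "finite V" "V \<noteq> {}" and X: "finite X" "X \<noteq> {}"
    and G: "G \<subseteq> PiE V (\<lambda>_. linear_orders X)" "\<And>p. p \<in> G \<Longrightarrow> 1 < card (F (profile_of V X p))"
  shows "card G / card (linear_orders X) ^ card V \<le> unresolved_proportion F X V"
proof -
  let ?L = "PiE V (\<lambda>_. linear_orders X)"
  have inj: "inj_on (profile_of V X) ?L"
    by (rule inj_on_profile_of)
  have fin: "finite (lin_profiles X V)"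
    using V X by (simp add: lin_profiles_eq_image finite_PiE finite_linear_orders)
  have "card (lin_profiles X V) = card (linear_orders X) ^ card V"
    using V X inj by (simp add: lin_profiles_eq_image card_image card_PiE)
  moreover have "card G \<le> card {P \<in> lin_profiles X V. 1 < card (F P)}"
  proof -
    have "profile_of V X ` G \<subseteq> {P \<in> lin_profiles X V. 1 < card (F P)}"
      using G V X by (auto simp: lin_profiles_eq_image)
    then have "card (profile_of V X ` G) \<le> card {P \<in> lin_profiles X V. 1 < card (F P)}"
      using fin by (intro card_mono) auto
    then show ?thesis
      using card_image[OF inj_on_subset[OF inj G(1)]] by simp
  qed
  ultimately show ?thesis
    unfolding unresolved_proportion_def by (simp add: divide_right_mono)
qed

lemma many_linear_profiles_near_scaled_margins:
  fixes P :: "('v, 'x) profile"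
  assumes P: "is_linear_profile P"
  obtains \<epsilon> :: real and n0 :: nat where "0 < \<epsilon>"
    and "\<And>V :: 'v set. finite V \<Longrightarrow> n0 \<le> card V \<Longrightarrow> \<exists>s>0. \<exists>G \<subseteq> PiE V (\<lambda>_. linear_orders (alts P)).
      \<epsilon> * real (card (linear_orders (alts P))) ^ card V \<le> real (card G) \<and>
      (\<forall>p\<in>G. \<forall>x\<in>alts P. \<forall>y\<in>alts P.
        \<bar>real_of_int (margin (profile_of V (alts P) p) x y) - s * real_of_int (margin P x y)\<bar> < s / 2)"
proof -
  define X where "X = alts P"
  define S where "S = linear_orders X"
  have X: "finite X" "X \<noteq> {}"
    using P by (simp_all add: X_def is_linear_profile_def is_profile_def)
  then have S: "finite S" "S \<noteq> {}"
    by (simp_all add: S_def finite_linear_orders linear_orders_nonempty)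
  define D where "D e R = real_of_int (ballot_margin R (fst e) (snd e))" for e :: "'x \<times> 'x" and R
  define count where "count R = real (card {i \<in> voters P. prefs P i = R})" for R
  have D_bound: "\<bar>D e R\<bar> \<le> 1" if "e \<in> X \<times> X" "R \<in> S" for e R
    by (simp add: D_def ballot_margin_def)
  have D_sum: "(\<Sum>R\<in>S. D e R) = 0" if "e \<in> X \<times> X" for e
    using sum_ballot_margin_linear_orders by (simp add: D_def S_def flip: of_int_sum)
  obtain \<epsilon> n0 where "0 < \<epsilon>" and near: "\<And>V :: 'v set. finite V \<Longrightarrow> n0 \<le> card V \<Longrightarrow>
      \<exists>s>0. \<epsilon> * real (card S) ^ card V \<le> real (card {p \<in> PiE V (\<lambda>_. S).
        \<forall>e\<in>X \<times> X. \<bar>(\<Sum>i\<in>V. D e (p i)) - s * (\<Sum>R\<in>S. count R * D e R)\<bar> < s / 2})"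
    using many_assignments_near_scaled_target[where 'v = 'v and D = D and m = count,
        OF S finite_cartesian_product[OF X(1) X(1)] D_bound D_sum] by blast
  show thesis
  proof (rule that[OF \<open>0 < \<epsilon>\<close>])
    fix V :: "'v set" assume V: "finite V" "n0 \<le> card V"
    then obtain s where "0 < s" and count_near: "\<epsilon> * real (card S) ^ card V \<le> real (card {p \<in> PiE V (\<lambda>_. S).
        \<forall>e\<in>X \<times> X. \<bar>(\<Sum>i\<in>V. D e (p i)) - s * (\<Sum>R\<in>S. count R * D e R)\<bar> < s / 2})"
      using near by blast
    let ?G = "{p \<in> PiE V (\<lambda>_. S).
      \<forall>e\<in>X \<times> X. \<bar>(\<Sum>i\<in>V. D e (p i)) - s * (\<Sum>R\<in>S. count R * D e R)\<bar> < s / 2}"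
    have "\<forall>p\<in>?G. \<forall>x\<in>X. \<forall>y\<in>X.
      \<bar>real_of_int (margin (profile_of V X p) x y) - s * real_of_int (margin P x y)\<bar> < s / 2"
    proof (intro ballI)
      fix p x y assume "p \<in> ?G" "x \<in> X" "y \<in> X"
      then have "\<bar>(\<Sum>i\<in>V. D (x, y) (p i)) - s * (\<Sum>R\<in>S. count R * D (x, y) R)\<bar> < s / 2"
        by blast
      moreover have "(\<Sum>R\<in>S. count R * D (x, y) R) = margin P x y"
        using margin_eq_sum_ballot_counts[OF P, of x y] by (simp add: S_def X_def count_def D_def)
      moreover have "real_of_int (margin (profile_of V X p) x y) = (\<Sum>i\<in>V. D (x, y) (p i))"
        using V(1) by (simp add: margin_profile_of D_def)
      ultimately show "\<bar>real_of_int (margin (profile_of V X p) x y) - s * real_of_int (margin P x y)\<bar> < s / 2"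
        by simp
    qed
    then show "\<exists>s>0. \<exists>G \<subseteq> PiE V (\<lambda>_. linear_orders (alts P)).
        \<epsilon> * real (card (linear_orders (alts P))) ^ card V \<le> real (card G) \<and>
        (\<forall>p\<in>G. \<forall>x\<in>alts P. \<forall>y\<in>alts P.
          \<bar>real_of_int (margin (profile_of V (alts P) p) x y) - s * real_of_int (margin P x y)\<bar> < s / 2)"
      unfolding X_def[symmetric] S_def[symmetric] using \<open>0 < s\<close> count_near
      by (intro exI[of _ s] conjI exI[of _ ?G]) auto
  qed
qed

lemma card_winners_le_1_if_asymptotically_resolvable:
  fixes F :: "('v, 'x) profile \<Rightarrow> 'x set"
  assumes "infinite (UNIV :: 'v set)" "asymptotically_resolvable F" "ordinal_margin_invariant F"
    and P: "is_linear_profile P" "margin_separated g P" "0 < g"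
  shows "card (F P) \<le> 1"
proof (rule ccontr)
  assume unresolved: "\<not> card (F P) \<le> 1"
  define X where "X = alts P"
  have "is_profile P"
    using P(1) by (simp add: is_linear_profile_def)
  then have X: "finite X" "X \<noteq> {}"
    by (simp_all add: X_def is_profile_def)
  obtain \<epsilon> n0 where "0 < \<epsilon>" and near: "\<And>V :: 'v set. finite V \<Longrightarrow> n0 \<le> card V \<Longrightarrow>
      \<exists>s>0. \<exists>G \<subseteq> PiE V (\<lambda>_. linear_orders X). \<epsilon> * real (card (linear_orders X)) ^ card V \<le> real (card G) \<and>
        (\<forall>p\<in>G. \<forall>x\<in>X. \<forall>y\<in>X.
          \<bar>real_of_int (margin (profile_of V X p) x y) - s * real_of_int (margin P x y)\<bar> < s / 2)"
    using many_linear_profiles_near_scaled_margins[OF P(1)] unfolding X_def by blast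
  obtain N where resolved: "\<And>V. finite V \<and> N \<le> card V \<longrightarrow> unresolved_proportion F X V < \<epsilon>"
    using assms(2) X \<open>0 < \<epsilon>\<close> unfolding asymptotically_resolvable_def by blast
  obtain V :: "'v set" where V: "finite V" "card V = max (max N n0) 1"
    using infinite_arbitrarily_large[OF assms(1)] by blast
  then have "n0 \<le> card V" "N \<le> card V" "V \<noteq> {}"
    by auto
  then obtain s G where "0 < s" "G \<subseteq> PiE V (\<lambda>_. linear_orders X)"
    and many: "\<epsilon> * real (card (linear_orders X)) ^ card V \<le> real (card G)"
    and close: "\<forall>p\<in>G. \<forall>x\<in>X. \<forall>y\<in>X.
      \<bar>real_of_int (margin (profile_of V X p) x y) - s * real_of_int (margin P x y)\<bar> < s / 2"
    using near[OF V(1)] by blast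
  have "1 < card (F (profile_of V X p))" if "p \<in> G" for p
  proof -
    have "is_profile (profile_of V X p)"
      using that \<open>G \<subseteq> _\<close> V(1) \<open>V \<noteq> {}\<close> X
      by (intro is_profile_profile_of) (auto simp: linear_orders_def linear_order_on'_def)
    moreover have "s / 2 \<le> s * real_of_int g / 2"
      using \<open>0 < s\<close> P(3) by simp
    then have "ordinal_margin_graph (profile_of V X p) = ordinal_margin_graph P"
      using close that by (intro ordinal_margin_graph_eq_if_close[OF _ P(2) P(3) \<open>0 < s\<close>])
        (auto simp: X_def intro: less_le_trans)
    ultimately show ?thesis
      using ordinal_margin_invariantD[OF assms(3) _ \<open>is_profile P\<close>] unresolved by simp
  qed
  then have "card G / card (linear_orders X) ^ card V \<le> unresolved_proportion F X V"
    using V(1) \<open>V \<noteq> {}\<close> X \<open>G \<subseteq> _\<close> by (intro unresolved_proportion_ge)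
  moreover have "\<epsilon> \<le> card G / card (linear_orders X) ^ card V"
    using many X by (simp add: pos_le_divide_eq card_gt_0_iff finite_linear_orders linear_orders_nonempty)
  moreover have "unresolved_proportion F X V < \<epsilon>"
    using resolved V(1) \<open>N \<le> card V\<close> by blast
  ultimately show False
    by linarith
qed

section \<open>Four alternatives\<close>

locale four_alternatives =
  fixes a b c d :: 'x and voter :: "nat \<Rightarrow> 'v"
  assumes distinct_abcd: "distinct [a, b, c, d]" and inj_voter: "inj voter"
begin

lemma distinct_alternatives [simp]:
  "a \<noteq> b" "a \<noteq> c" "a \<noteq> d" "b \<noteq> c" "b \<noteq> d" "c \<noteq> d"
  "b \<noteq> a" "c \<noteq> a" "d \<noteq> a" "c \<noteq> b" "d \<noteq> b" "d \<noteq> c"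
  using distinct_abcd by auto

abbreviation profile :: "('x \<times> 'x) set list \<Rightarrow> ('v, 'x) profile" where
  "profile \<equiv> list_profile voter {a, b, c, d}"

lemma margin_profile: "margin (profile Ls) x y = (\<Sum>L\<leftarrow>Ls. ballot_margin L x y)"
  by (rule margin_list_profile[OF inj_voter])

lemma linear_order_on'_ranking_perm:
  "distinct xs \<Longrightarrow> set xs = {a, b, c, d} \<Longrightarrow> linear_order_on' {a, b, c, d} (ranking xs)"
  using linear_order_on'_ranking by metis

lemma is_linear_profile_profile:
  "Ls \<noteq> [] \<Longrightarrow> \<forall>L\<in>set Ls. linear_order_on' {a, b, c, d} L \<Longrightarrow> is_linear_profile (profile Ls)"
  by (rule is_linear_profile_list_profile[OF inj_voter]) simp_all

definition "P1 = replicate 31 (ranking [a, b, c, d]) @ replicate 20 (ranking [a, c, d, b]) @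
  replicate 12 (ranking [c, b, a, d]) @ replicate 6 (ranking [c, d, a, b]) @ replicate 44 (ranking [d, b, c, a])"

definition "P2 = replicate 34 (ranking [a, b, c, d]) @ replicate 20 (ranking [a, c, d, b]) @
  replicate 12 (ranking [c, b, a, d]) @ replicate 13 (ranking [c, d, a, b]) @ replicate 44 (ranking [d, b, c, a])"

definition "Q2 = replicate 39 (ranking [a, b, c, d]) @ replicate 13 (ranking [c, a, d, b]) @
  replicate 22 (ranking [c, d, b, a]) @ replicate 3 (ranking [d, a, c, b]) @ replicate 26 (ranking [d, b, c, a])"

definition "P5 = replicate 16 (ranking [a, d, b, c]) @ replicate 36 (ranking [b, a, c, d]) @
  replicate 38 (ranking [c, d, a, b]) @ replicate 1 (ranking [d, a, b, c]) @ replicate 20 (ranking [d, b, c, a])"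

definition "P4a = P1 @ replicate 3 (ranking [a, b, c, d])"
definition "P4b = P2 @ replicate 7 (ranking [b, a, d, c])"
definition "P3a = Q2 @ replicate 3 (ranking [a, c, d, b])"
definition "P3c = P5 @ replicate 11 (ranking [c, a, b, d])"

lemmas profile_defs = P1_def P2_def Q2_def P5_def P4a_def P4b_def P3a_def P3c_def

lemmas margin_computation = margin_profile ballot_margin_def sum_list_replicate

lemma is_linear_profile_profiles:
  "is_linear_profile (profile P1)" "is_linear_profile (profile P2)" "is_linear_profile (profile Q2)"
  "is_linear_profile (profile P5)" "is_linear_profile (profile P4a)" "is_linear_profile (profile P3c)"
  unfolding profile_defs
  by (intro is_linear_profile_profile; auto simp del: ranking.simps intro!: linear_order_on'_ranking_perm)+

lemma margin_profile_swap: "margin (profile Ls) x y = m \<Longrightarrow> margin (profile Ls) y x = - m"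
  by (subst margin_swap) simp

(* Each table lists the positive margins in decreasing order, i.e. the ordinal margin graph. *)
lemma margins_P2:
  "margin (profile P2) c d = 35" "margin (profile P2) b c = 33" "margin (profile P2) d b = 31"
  "margin (profile P2) c a = 15" "margin (profile P2) a b = 11" "margin (profile P2) a d = 9"
  by (simp_all add: margin_computation profile_defs)

lemma margins_Q2:
  "margin (profile Q2) c d = 45" "margin (profile Q2) b c = 27" "margin (profile Q2) d b = 25"
  "margin (profile Q2) c a = 19" "margin (profile Q2) a b = 7" "margin (profile Q2) a d = 1"
  by (simp_all add: margin_computation profile_defs)

lemma margins_P4:
  "margin (profile P4a) b c = 40" "margin (profile P4a) c d = 28" "margin (profile P4a) d b = 24"
  "margin (profile P4a) a d = 16" "margin (profile P4a) c a = 8" "margin (profile P4a) a b = 4"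
  "margin (profile P4b) b c = 40" "margin (profile P4b) c d = 28" "margin (profile P4b) d b = 24"
  "margin (profile P4b) a d = 16" "margin (profile P4b) c a = 8" "margin (profile P4b) a b = 4"
  by (simp_all add: margin_computation profile_defs)

lemma margins_P3:
  "margin (profile P3a) c d = 48" "margin (profile P3a) d b = 28" "margin (profile P3a) b c = 24"
  "margin (profile P3a) c a = 16" "margin (profile P3a) a b = 10" "margin (profile P3a) a d = 4"
  "margin (profile P3c) c d = 48" "margin (profile P3c) d b = 28" "margin (profile P3c) b c = 24"
  "margin (profile P3c) c a = 16" "margin (profile P3c) a b = 10" "margin (profile P3c) a d = 4"
  by (simp_all add: margin_computation profile_defs)

lemmas margin_tables = margins_P2 margins_P2[THEN margin_profile_swap]
  margins_Q2 margins_Q2[THEN margin_profile_swap] margins_P4 margins_P4[THEN margin_profile_swap]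
  margins_P3 margins_P3[THEN margin_profile_swap]

lemma ordinal_margin_graph_Q2: "ordinal_margin_graph (profile Q2) = ordinal_margin_graph (profile P2)"
  by (rule ordinal_margin_graph_eqI) (simp_all add: margin_tables)

lemma ordinal_margin_graph_P4: "ordinal_margin_graph (profile P4b) = ordinal_margin_graph (profile P4a)"
  by (rule ordinal_margin_graph_eq_if_margins_eq) (auto simp: margin_tables)

lemma ordinal_margin_graph_P3: "ordinal_margin_graph (profile P3a) = ordinal_margin_graph (profile P3c)"
  by (rule ordinal_margin_graph_eq_if_margins_eq) (auto simp: margin_tables)

lemma margin_separated_P4a: "margin_separated 3 (profile P4a)"
  by (simp add: margin_separated_def margin_tables)

lemma margin_separated_P3c: "margin_separated 3 (profile P3c)"
  by (simp add: margin_separated_def margin_tables)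

lemma is_profile_profiles:
  "is_profile (profile P1)" "is_profile (profile P2)" "is_profile (profile Q2)" "is_profile (profile P5)"
  "is_profile (profile P4a)" "is_profile (profile P3c)"
  using is_linear_profile_profiles by (simp_all add: is_linear_profile_def)

lemma winner_P1:
  assumes "voting_method F" "positive_involvement F" "condorcet_winner_criterion F"
  shows "a \<in> F (profile P1)"
proof -
  note exclude = not_winner_if_extension_has_condorcet_winner[OF inj_voter assms(2,3) is_profile_profiles(1)]
  have "b \<notin> F (profile P1)"
    by (rule exclude[where xs = "[d, a, c]" and k = 26 and y = d])
      (auto simp: condorcet_winner_def margin_computation P1_def)
  moreover have "c \<notin> F (profile P1)"
    by (rule exclude[where xs = "[b, a, d]" and k = 28 and y = b])
      (auto simp: condorcet_winner_def margin_computation P1_def)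
  moreover have "d \<notin> F (profile P1)"
    by (rule exclude[where xs = "[a, b, c]" and k = 12 and y = a])
      (auto simp: condorcet_winner_def margin_computation P1_def)
  ultimately show ?thesis
    using voting_methodD[OF assms(1) is_profile_profiles(1)] by auto
qed

lemma winner_P2:
  assumes "voting_method F" "positive_involvement F" "condorcet_winner_criterion F"
  shows "a \<in> F (profile P2) \<or> b \<in> F (profile P2)"
proof -
  note exclude = not_winner_if_extension_has_condorcet_winner[OF inj_voter assms(2,3) is_profile_profiles(2)]
  have "c \<notin> F (profile P2)"
    by (rule exclude[where xs = "[b, a, d]" and k = 32 and y = b])
      (auto simp: condorcet_winner_def margin_computation P2_def)
  moreover have "d \<notin> F (profile P2)"
    by (rule exclude[where xs = "[c, a, b]" and k = 34 and y = c])
      (auto simp: condorcet_winner_def margin_computation P2_def)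
  ultimately show ?thesis
    using voting_methodD[OF assms(1) is_profile_profiles(2)] by auto
qed

lemma winner_P5:
  assumes "voting_method F" "positive_involvement F" "condorcet_winner_criterion F"
    and "condorcet_loser_criterion F"
  shows "c \<in> F (profile P5)"
proof -
  note exclude = not_winner_if_extension_has_condorcet_winner[OF inj_voter assms(2,3) is_profile_profiles(4)]
  have "condorcet_loser (profile P5) a"
    by (auto simp: condorcet_loser_def margin_computation P5_def)
  then have "a \<notin> F (profile P5)"
    using assms(4) is_profile_profiles(4) unfolding condorcet_loser_criterion_def by blast
  moreover have "b \<notin> F (profile P5)"
    by (rule exclude[where xs = "[d, a, c]" and k = 38 and y = d])
      (auto simp: condorcet_winner_def margin_computation P5_def)
  moreover have "d \<notin> F (profile P5)"
    by (rule exclude[where xs = "[c, a, b]" and k = 36 and y = c])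
      (auto simp: condorcet_winner_def margin_computation P5_def)
  ultimately show ?thesis
    using voting_methodD[OF assms(1) is_profile_profiles(4)] by auto
qed

lemma multiple_winners:
  assumes vm: "voting_method F" and pi: "positive_involvement F"
    and cw: "condorcet_winner_criterion F" and cl: "condorcet_loser_criterion F"
    and omi: "ordinal_margin_invariant F"
  shows "1 < card (F (profile P4a)) \<or> 1 < card (F (profile P3c))"
proof -
  note append = winner_list_profile_append[OF inj_voter pi]
  have "a \<in> F (profile P4a)"
    using append[OF is_profile_profiles(1) winner_P1[OF vm pi cw], of "[b, c, d]" 3]
    by (simp add: P4a_def insert_commute)
  moreover have "c \<in> F (profile P3c)"
    using append[OF is_profile_profiles(4) winner_P5[OF vm pi cw cl], of "[a, b, d]" 11]
    by (simp add: P3c_def insert_commute)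
  moreover have "b \<in> F (profile P4a) \<or> a \<in> F (profile P3c)"
    using winner_P2[OF vm pi cw]
  proof
    assume "a \<in> F (profile P2)"
    then have "a \<in> F (profile Q2)"
      using ordinal_margin_invariantD[OF omi is_profile_profiles(3,2) ordinal_margin_graph_Q2] by simp
    then have "a \<in> F (profile P3a) \<and> is_profile (profile P3a)"
      using append[OF is_profile_profiles(3), of a "[c, d, b]" 3] by (simp add: P3a_def insert_commute)
    then show ?thesis
      using ordinal_margin_invariantD[OF omi _ is_profile_profiles(6) ordinal_margin_graph_P3] by simp
  next
    assume "b \<in> F (profile P2)"
    then have "b \<in> F (profile P4b) \<and> is_profile (profile P4b)"
      using append[OF is_profile_profiles(2), of b "[a, d, c]" 7] by (simp add: P4b_def insert_commute)
    then show ?thesis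
      using ordinal_margin_invariantD[OF omi _ is_profile_profiles(5) ordinal_margin_graph_P4] by simp
  qed
  moreover have "finite (F (profile P4a))" "finite (F (profile P3c))"
    using voting_methodD[OF vm is_profile_profiles(5)] voting_methodD[OF vm is_profile_profiles(6)]
    by (auto intro: finite_subset)
  moreover have two: "1 < card A" if "finite A" "x \<in> A" "y \<in> A" "x \<noteq> y" for A and x y :: 'x
  proof -
    have "\<not> card A \<le> Suc 0"
      using card_le_Suc0_iff_eq[OF that(1)] that(2-4) by blast
    then show ?thesis by simp
  qed
  ultimately show ?thesis
    by (metis distinct_alternatives(1,2))
qed

lemma no_method_resolves_separated_profiles:
  fixes F :: "('v, 'x) profile \<Rightarrow> 'x set"
  assumes "voting_method F" "positive_involvement F" "condorcet_winner_criterion F"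
    and "condorcet_loser_criterion F" "ordinal_margin_invariant F"
    and resolves: "\<And>P. is_linear_profile P \<Longrightarrow> margin_separated 3 P \<Longrightarrow> card (F P) \<le> 1"
  shows False
  using multiple_winners[OF assms(1-5)]
    resolves[OF is_linear_profile_profiles(5) margin_separated_P4a]
    resolves[OF is_linear_profile_profiles(6) margin_separated_P3c]
  by linarith

end

theorem theorem1:
  assumes "infinite (UNIV :: 'x set)" and "infinite (UNIV :: 'v set)"
  shows "\<not> (\<exists>F :: ('v, 'x) profile \<Rightarrow> 'x set.
             voting_method F \<and> positive_involvement F \<and>
             condorcet_winner_criterion F \<and> condorcet_loser_criterion F \<and>
             single_voter_resolvable F \<and> ordinal_margin_invariant F)
       \<and> \<not> (\<exists>F :: ('v, 'x) profile \<Rightarrow> 'x set.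
             voting_method F \<and> positive_involvement F \<and>
             condorcet_winner_criterion F \<and> condorcet_loser_criterion F \<and>
             asymptotically_resolvable F \<and> ordinal_margin_invariant F)"
proof -
  obtain alt :: "nat \<Rightarrow> 'x" where alt: "inj alt"
    using infinite_iff_countable_subset[of "UNIV :: 'x set"] assms(1) by auto
  obtain voter :: "nat \<Rightarrow> 'v" where voter: "inj voter"
    using infinite_iff_countable_subset[of "UNIV :: 'v set"] assms(2) by auto
  have "distinct [alt 0, alt 1, alt 2, alt 3]"
    using alt by (simp add: inj_eq)
  then interpret four_alternatives "alt 0" "alt 1" "alt 2" "alt 3" voter
    using voter by unfold_locales
  show ?thesis
  proof (intro conjI notI; elim exE conjE)
    fix F :: "('v, 'x) profile \<Rightarrow> 'x set"
    assume F: "voting_method F" "positive_involvement F" "condorcet_winner_criterion F"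
      "condorcet_loser_criterion F" "single_voter_resolvable F" "ordinal_margin_invariant F"
    show False
      by (rule no_method_resolves_separated_profiles[OF F(1-4,6)],
          rule card_winners_le_1_if_single_voter_resolvable[OF F(5,6), where g = 3])
        (simp_all add: is_linear_profile_def)
  next
    fix F :: "('v, 'x) profile \<Rightarrow> 'x set"
    assume F: "voting_method F" "positive_involvement F" "condorcet_winner_criterion F"
      "condorcet_loser_criterion F" "asymptotically_resolvable F" "ordinal_margin_invariant F"
    show False
      by (rule no_method_resolves_separated_profiles[OF F(1-4,6)],
          rule card_winners_le_1_if_asymptotically_resolvable[OF assms(2) F(5,6), where g = 3]) simp_all
  qed
qed

end
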